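(* There exists an approval-based SCV instance with exactly two candidate subsets and quotas $k_1=k_2=1$ for which no committee satisfies Span-wise Justified Representation (SW-JR).
   Context: An approval-based sub-committee voting (SCV) instance consists of a set of voters $N=\{1,\ldots,n\}$, a finite set of candidates $C$ partitioned into candidate subsets $C_1,\ldots,C_\ell$, positive integer quotas $k_j\le |C_j|$ for $j=1,\ldots,\ell$ with $k=\sum_{j=1}^\ell k_j$, and an approval ballot $A_i\subseteq C$ for each voter $i\in N$. A committee is a set $W\subseteq C$ with $|W\cap C_j|=k_j$ for every $j$ (so $|W|=k$). A committee $W$ satisfies SW-JR if for every $X\subseteq N$ with $|X|\ge n/k$ and $|\bigcap_{i\in X}A_i|\ge 1$ we have $|W\cap \bigcup_{i\in X}A_i|\ge 1$. *)

theory Defs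
  imports Complex_Main
begin

definition scv_instance :: "nat \<Rightarrow> 'c set list \<Rightarrow> nat list \<Rightarrow> (nat \<Rightarrow> 'c set) \<Rightarrow> bool" where
  "scv_instance n Cs ks A \<longleftrightarrow>
     n \<ge> 1 \<and>
     finite (\<Union> (set Cs)) \<and>
     length ks = length Cs \<and>
     (\<forall>j < length Cs. \<forall>j' < length Cs. j \<noteq> j' \<longrightarrow> Cs ! j \<inter> Cs ! j' = {}) \<and>
     (\<forall>j < length Cs. 0 < ks ! j \<and> ks ! j \<le> card (Cs ! j)) \<and>
     (\<forall>i \<in> {1..n}. A i \<subseteq> \<Union> (set Cs))"

definition committee :: "'c set list \<Rightarrow> nat list \<Rightarrow> 'c set \<Rightarrow> bool" where
  "committee Cs ks W \<longleftrightarrow> W \<subseteq> \<Union> (set Cs) \<and>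
     (\<forall>j < length Cs. card (W \<inter> Cs ! j) = ks ! j)"

definition SW_JR :: "nat \<Rightarrow> 'c set list \<Rightarrow> nat list \<Rightarrow> (nat \<Rightarrow> 'c set) \<Rightarrow> 'c set \<Rightarrow> bool" where
  "SW_JR n Cs ks A W \<longleftrightarrow>
     (\<forall>X \<subseteq> {1..n}.
        (real (card X) \<ge> real n / real (sum_list ks) \<and> card (\<Inter> i\<in>X. A i) \<ge> 1)
        \<longrightarrow> card (W \<inter> (\<Union> i\<in>X. A i)) \<ge> 1)"

end

theory Submission
  imports Defs
begin

text \<open>Take two voters and quotas k_1 = k_2 = 1, so k = n = 2 and every single voter is a
  justified group. If voter 1 approves only candidate 1 and voter 2 only candidate 2, both in
  C_1 = {1, 2}, then SW-JR forces both candidates into the committee, exceeding the quota 1.\<close>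

lemma SW_JR_singleton_ballot_elected:
  assumes "SW_JR n Cs ks A W" and "n \<le> sum_list ks" and "i \<in> {1..n}" and "A i = {c}"
  shows "c \<in> W"
proof -
  have "real n / real (sum_list ks) \<le> 1"
    using assms(2) by (cases "sum_list ks = 0") (auto simp: divide_le_eq)
  then have "card (W \<inter> A i) \<ge> 1"
    using assms(1,3,4) unfolding SW_JR_def by (drule_tac x = "{i}" in spec) auto
  then show ?thesis
    using assms(4) by (cases "c \<in> W") auto
qed

theorem mainTheorem1:
  shows "\<exists>(n::nat) (Cs :: nat set list) (ks :: nat list) (A :: nat \<Rightarrow> nat set).
           scv_instance n Cs ks A \<and> length Cs = 2 \<and> ks = [1, 1] \<and>
           \<not> (\<exists>W. committee Cs ks W \<and> SW_JR n Cs ks A W)"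
proof (intro exI conjI)
  let ?Cs = "[{1, 2}, {3, 4}] :: nat set list"
  let ?A = "\<lambda>i :: nat. if i = 1 then {1 :: nat} else {2}"
  show "scv_instance 2 ?Cs [1, 1] ?A"
    unfolding scv_instance_def by (auto simp: less_Suc_eq nth_Cons')
  show "length ?Cs = 2" and "[1, 1] = [1 :: nat, 1]" by simp_all
  show "\<not> (\<exists>W. committee ?Cs [1, 1] W \<and> SW_JR 2 ?Cs [1, 1] ?A W)"
  proof
    assume "\<exists>W. committee ?Cs [1, 1] W \<and> SW_JR 2 ?Cs [1, 1] ?A W"
    then obtain W where committee: "committee ?Cs [1, 1] W"
      and jr: "SW_JR 2 ?Cs [1, 1] ?A W" by blast
    have "1 \<in> W" and "2 \<in> W"
      using SW_JR_singleton_ballot_elected[OF jr, of 1 1]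
        SW_JR_singleton_ballot_elected[OF jr, of 2 2] by auto
    then have "W \<inter> {1, 2} = {1, 2}" by auto
    moreover have "card (W \<inter> {1, 2}) = 1"
      using committee unfolding committee_def by auto
    ultimately show False by simp
  qed
qed

end
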